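(* Let $(X,Y)\sim P_{X,Y}$ be random variables in $\{0,1\}\times\mathcal{Y}$, $\mathcal{Y}=\{1,\dots,|\mathcal{Y}|\}$ with $|\mathcal{Y}|\geq 3$, let $p_y=\mathbb{P}(X=0|Y=y)$ and assume $p_1\le\cdots\le p_{|\mathcal{Y}|}$. For $i\in\{2,\dots,|\mathcal{Y}|-1\}$ let $\alpha_i\in[0,1]$ satisfy $\alpha_ip_{i-1}+(1-\alpha_i)p_{i+1}=p_i$ and define $P^i_{Y,Z,X}=P_YP^i_{Z|Y}P^i_{X|Z}$ on $\mathcal{Y}\times(\mathcal{Y}\setminus\{i\})\times\{0,1\}$ by $P^i_{Z|Y}(z|y)=1$ if $y\neq i,z=y$; $=\alpha_i$ if $y=i,z=i-1$; $=1-\alpha_i$ if $y=i,z=i+1$; $=0$ otherwise; and $P^i_{X|Z}(0|z)=p_z$. Then there exists $i\in\{2,\dots,|\mathcal{Y}|-1\}$ such that under $P^i_{Y,Z,X}$, \[ I(X;Z)-I(X;Y)\leq\frac{256}{|\mathcal{Y}|^3}. \]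
   Context: Logarithms (and mutual informations) are natural. *)

theory Defs
  imports Complex_Main
begin

definition mutual_info :: "'a set \<Rightarrow> 'b set \<Rightarrow> ('a \<Rightarrow> 'b \<Rightarrow> real) \<Rightarrow> real" where
  "mutual_info A B J =
     (\<Sum>a\<in>A. \<Sum>b\<in>B.
        if J a b = 0 then 0
        else J a b * ln (J a b / ((\<Sum>b'\<in>B. J a b') * (\<Sum>a'\<in>A. J a' b))))"

definition kernelZ :: "(nat \<Rightarrow> real) \<Rightarrow> nat \<Rightarrow> nat \<Rightarrow> nat \<Rightarrow> real" where
  "kernelZ \<alpha> i y z =
     (if y \<noteq> i \<and> z = y then 1
      else if y = i \<and> z = i - 1 then \<alpha> i
      else if y = i \<and> z = i + 1 then 1 - \<alpha> i
      else 0)"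

definition kernelX :: "(nat \<Rightarrow> real) \<Rightarrow> nat \<Rightarrow> nat \<Rightarrow> real" where
  "kernelX p z x = (if x = 0 then p z else 1 - p z)"

definition PYZX :: "(nat \<Rightarrow> real) \<Rightarrow> (nat \<Rightarrow> real) \<Rightarrow> (nat \<Rightarrow> real) \<Rightarrow> nat \<Rightarrow> nat \<Rightarrow> nat \<Rightarrow> nat \<Rightarrow> real" where
  "PYZX q p \<alpha> i y z x = q y * kernelZ \<alpha> i y z * kernelX p z x"

definition PXZ :: "nat \<Rightarrow> (nat \<Rightarrow> real) \<Rightarrow> (nat \<Rightarrow> real) \<Rightarrow> (nat \<Rightarrow> real) \<Rightarrow> nat \<Rightarrow> nat \<Rightarrow> nat \<Rightarrow> real" where
  "PXZ n q p \<alpha> i x z = (\<Sum>y\<in>{1..n}. PYZX q p \<alpha> i y z x)"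

definition PXY :: "nat \<Rightarrow> (nat \<Rightarrow> real) \<Rightarrow> (nat \<Rightarrow> real) \<Rightarrow> (nat \<Rightarrow> real) \<Rightarrow> nat \<Rightarrow> nat \<Rightarrow> nat \<Rightarrow> real" where
  "PXY n q p \<alpha> i x y = (\<Sum>z\<in>{1..n} - {i}. PYZX q p \<alpha> i y z x)"

end

theory Submission
  imports Defs
begin

text \<open>
  Under P^i the channel to X is unchanged except that the mass q i of Y = i is split between
  i - 1 and i + 1, so I(X;Z) - I(X;Y) = q i * gap i, where gap i is the concavity gap of the
  binary entropy h at p i = \<alpha> i p (i - 1) + (1 - \<alpha> i) p (i + 1). Comparing h with its tangent
  at p i bounds gap i by a chi-square term, which is at most 1 and at most 8 D i^2, where
  D i = s (p (i + 1)) - s (p (i - 1)) and s x = sqrt x - sqrt (1 - x). As s is increasing with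
  values in [-1, 1], the D i telescope to at most 4. If every q i * gap i exceeded T, then
  q i > T and q i > T / (8 D i^2) for all n - 2 indices, so by convexity of 1/D^2 the sum of
  the q i would exceed both (n - 2) T and T (n - 2)^3 / 128; for T = 256/n^3 one of these
  contradicts sum q i \<le> 1.
\<close>

definition bin_entropy :: "real \<Rightarrow> real" where
  "bin_entropy x = - x * ln x - (1 - x) * ln (1 - x)"

lemma bin_entropy_0 [simp]: "bin_entropy 0 = 0"
  and bin_entropy_1 [simp]: "bin_entropy 1 = 0"
  by (simp_all add: bin_entropy_def)

lemma mult_ln_ratio_le:
  fixes x m :: real
  assumes "0 \<le> x" "0 < m"
  shows "x * ln x - x * ln m \<le> x * (x - m) / m"
proof (cases "x = 0")
  case False
  with assms have "ln x - ln m \<le> x / m - 1"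
    using ln_le_minus_one[of "x / m"] by (simp add: ln_div)
  with assms have "x * (ln x - ln m) \<le> x * (x / m - 1)"
    by (simp add: mult_left_mono)
  with assms show ?thesis
    by (simp add: field_simps)
qed simp

lemma bin_kl_le_chi_square:
  fixes x m :: real
  assumes "0 \<le> x" "x \<le> 1" "0 < m" "m < 1"
  shows "- bin_entropy x - (x * ln m + (1 - x) * ln (1 - m)) \<le> (x - m)^2 / (m * (1 - m))"
proof -
  have "- bin_entropy x - (x * ln m + (1 - x) * ln (1 - m))
      = (x * ln x - x * ln m) + ((1 - x) * ln (1 - x) - (1 - x) * ln (1 - m))"
    by (simp add: bin_entropy_def algebra_simps)
  also have "\<dots> \<le> x * (x - m) / m + (1 - x) * ((1 - x) - (1 - m)) / (1 - m)"
    using assms by (intro add_mono mult_ln_ratio_le) auto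
  also have "\<dots> = (x - m)^2 / (m * (1 - m))"
    using assms by (simp add: field_simps power2_eq_square)
  finally show ?thesis .
qed

lemma bin_entropy_concavity_gap_le_chi_square:
  fixes a b t m :: real
  assumes "0 \<le> a" "a \<le> 1" "0 \<le> b" "b \<le> 1" "0 \<le> t" "t \<le> 1"
    and mix: "t * a + (1 - t) * b = m" and "0 < m" "m < 1"
  shows "bin_entropy m - t * bin_entropy a - (1 - t) * bin_entropy b
           \<le> (m - a) * (b - m) / (m * (1 - m))"
proof -
  \<comment> \<open>L is affine with L m = - bin_entropy m, so the gap is the t-average of the binary
      KL divergences - bin_entropy x - L x.\<close>
  define L where "L x = x * ln m + (1 - x) * ln (1 - m)" for x
  have "t * L a + (1 - t) * L b = - bin_entropy m"
    unfolding L_def bin_entropy_def mix[symmetric] by (simp add: algebra_simps)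
  then have "bin_entropy m - t * bin_entropy a - (1 - t) * bin_entropy b
      = t * (- bin_entropy a - L a) + (1 - t) * (- bin_entropy b - L b)"
    by (simp add: algebra_simps)
  also have "\<dots> \<le> t * ((a - m)^2 / (m * (1 - m))) + (1 - t) * ((b - m)^2 / (m * (1 - m)))"
    unfolding L_def using assms by (intro add_mono mult_left_mono bin_kl_le_chi_square) auto
  also have "\<dots> = (t * (a - m)^2 + (1 - t) * (b - m)^2) / (m * (1 - m))"
    by (simp add: add_divide_distrib)
  also have "t * (a - m)^2 + (1 - t) * (b - m)^2 = (m - a) * (b - m)"
    unfolding mix[symmetric] by (simp add: power2_eq_square algebra_simps)
  finally show ?thesis .
qed

lemma bin_entropy_concavity_gap_degenerate:
  fixes a b t m :: real
  assumes "0 \<le> a" "0 \<le> b" "a \<le> 1" "b \<le> 1" "0 \<le> t" "t \<le> 1"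
    and mix: "t * a + (1 - t) * b = m" and "m = 0 \<or> m = 1"
  shows "bin_entropy m - t * bin_entropy a - (1 - t) * bin_entropy b = 0"
  using assms(8)
proof
  assume "m = 0"
  moreover have "0 \<le> t * a" "0 \<le> (1 - t) * b"
    using assms by simp_all
  ultimately have "t * a = 0" "(1 - t) * b = 0"
    using mix by linarith+
  with \<open>m = 0\<close> show ?thesis by auto
next
  assume "m = 1"
  moreover have "0 \<le> t * (1 - a)" "0 \<le> (1 - t) * (1 - b)"
    using assms by simp_all
  moreover have "t * (1 - a) + (1 - t) * (1 - b) = 1 - m"
    using mix by (simp add: algebra_simps)
  ultimately have "t * (1 - a) = 0" "(1 - t) * (1 - b) = 0"
    by linarith+
  with \<open>m = 1\<close> show ?thesis by auto
qed

lemma diff_mult_diff_le_sqrt_diff_square: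
  fixes a m b :: real
  assumes "0 \<le> a" "a \<le> m" "m \<le> b"
  shows "(m - a) * (b - m) \<le> 4 * m * (sqrt b - sqrt a)^2"
proof -
  define s t u where "s = sqrt a" and "t = sqrt m" and "u = sqrt b"
  define x y where "x = t - s" and "y = u - t"
  have "0 \<le> s" "0 \<le> x" "0 \<le> y" "x \<le> t"
    using assms by (auto simp: s_def t_def u_def x_def y_def)
  have "x * y * (2 * t + y) \<le> 2 * t * (x + y)^2"
  proof -
    have "x * y^2 \<le> t * y^2"
      using \<open>x \<le> t\<close> by (intro mult_right_mono) auto
    moreover have "0 \<le> t * x^2" "0 \<le> t * x * y" "0 \<le> t * y^2"
      using \<open>0 \<le> x\<close> \<open>0 \<le> y\<close> \<open>x \<le> t\<close> by simp_all
    ultimately show ?thesis by (simp add: power2_eq_square algebra_simps)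
  qed
  have "(m - a) * (b - m) = x * (t + s) * (y * (2 * t + y))"
    using assms by (simp add: s_def t_def u_def x_def y_def algebra_simps power2_eq_square[symmetric])
  also have "\<dots> \<le> x * (2 * t) * (y * (2 * t + y))"
    using \<open>0 \<le> x\<close> \<open>0 \<le> y\<close> \<open>0 \<le> s\<close> \<open>x \<le> t\<close>
    by (intro mult_right_mono mult_left_mono) (auto simp: x_def)
  also have "\<dots> = 2 * t * (x * y * (2 * t + y))"
    by (simp add: algebra_simps)
  also have "\<dots> \<le> 2 * t * (2 * t * (x + y)^2)"
    using \<open>x * y * (2 * t + y) \<le> 2 * t * (x + y)^2\<close> \<open>0 \<le> x\<close> \<open>x \<le> t\<close>
    by (intro mult_left_mono) auto
  also have "\<dots> = 4 * m * (sqrt b - sqrt a)^2"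
    using assms by (simp add: s_def t_def u_def x_def y_def power2_eq_square)
  finally show ?thesis .
qed

text \<open>sqrt_spread b - sqrt_spread a dominates both sqrt b - sqrt a and sqrt (1 - a) - sqrt (1 - b),
  and its increments telescope along a monotone sequence.\<close>
definition sqrt_spread :: "real \<Rightarrow> real" where
  "sqrt_spread x = sqrt x - sqrt (1 - x)"

lemma sqrt_spread_mono:
  assumes "a \<le> b"
  shows "sqrt_spread a \<le> sqrt_spread b"
proof -
  have "sqrt a \<le> sqrt b" "sqrt (1 - b) \<le> sqrt (1 - a)"
    using assms by simp_all
  then show ?thesis
    unfolding sqrt_spread_def by linarith
qed

lemma abs_sqrt_spread_le_1:
  assumes "0 \<le> x" "x \<le> 1"
  shows "\<bar>sqrt_spread x\<bar> \<le> 1"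
proof -
  have "0 \<le> sqrt x" "sqrt x \<le> 1" "0 \<le> sqrt (1 - x)" "sqrt (1 - x) \<le> 1"
    using assms by simp_all
  then show ?thesis
    unfolding sqrt_spread_def by linarith
qed

lemma chi_square_term_le_1:
  fixes a m b :: real
  assumes "0 \<le> a" "a \<le> m" "m \<le> b" "b \<le> 1" "0 < m" "m < 1"
  shows "(m - a) * (b - m) / (m * (1 - m)) \<le> 1"
proof -
  have "(m - a) * (b - m) \<le> m * (1 - m)"
    using assms by (intro mult_mono) auto
  with assms show ?thesis by simp
qed

lemma chi_square_term_le_sqrt_spread_diff:
  fixes a m b :: real
  assumes "0 \<le> a" "a \<le> m" "m \<le> b" "b \<le> 1" "0 < m" "m < 1"
  shows "(m - a) * (b - m) / (m * (1 - m))
           \<le> 8 * (sqrt_spread b - sqrt_spread a)^2"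
proof -
  define d d' where "d = sqrt b - sqrt a" and "d' = sqrt (1 - a) - sqrt (1 - b)"
  have "0 \<le> d" "0 \<le> d'"
    using assms by (simp_all add: d_def d'_def)
  then have "d^2 \<le> (d + d')^2" "d'^2 \<le> (d + d')^2"
    by (simp_all add: power_mono)
  moreover have "(m - a) * (b - m) / (m * (1 - m)) \<le> 8 * d^2" if "m \<le> 1/2"
  proof -
    have "(m - a) * (b - m) / (m * (1 - m)) \<le> 4 * m * d^2 / (m * (1 - m))"
      using diff_mult_diff_le_sqrt_diff_square[of a m b] assms by (intro divide_right_mono) (auto simp: d_def)
    also have "\<dots> = 4 * d^2 / (1 - m)"
      using assms by simp
    also have "\<dots> \<le> 8 * d^2"
    proof -
      have "d^2 * 1 \<le> d^2 * (2 * (1 - m))"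
        using that by (intro mult_left_mono) auto
      with assms show ?thesis
        by (simp add: divide_le_eq algebra_simps)
    qed
    finally show ?thesis .
  qed
  moreover have "(m - a) * (b - m) / (m * (1 - m)) \<le> 8 * d'^2" if "\<not> m \<le> 1/2"
  proof -
    have "(m - a) * (b - m) = ((1 - m) - (1 - b)) * ((1 - a) - (1 - m))"
      by (simp add: algebra_simps)
    also have "\<dots> \<le> 4 * (1 - m) * d'^2"
      using diff_mult_diff_le_sqrt_diff_square[of "1 - b" "1 - m" "1 - a"] assms by (simp add: d'_def)
    finally have "(m - a) * (b - m) / (m * (1 - m)) \<le> 4 * (1 - m) * d'^2 / (m * (1 - m))"
      using assms by (intro divide_right_mono) auto
    also have "\<dots> = 4 * d'^2 / m"
      using assms by (simp add: field_simps)
    also have "\<dots> \<le> 8 * d'^2"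
    proof -
      have "d'^2 * 1 \<le> d'^2 * (2 * m)"
        using that by (intro mult_left_mono) auto
      with assms show ?thesis
        by (simp add: divide_le_eq algebra_simps)
    qed
    finally show ?thesis .
  qed
  moreover have "sqrt_spread b - sqrt_spread a = d + d'"
    by (simp add: sqrt_spread_def d_def d'_def)
  ultimately show ?thesis by fastforce
qed

lemma bin_entropy_concavity_gap_bounds:
  fixes a b t m :: real
  assumes "0 \<le> a" "a \<le> m" "m \<le> b" "b \<le> 1" "0 \<le> t" "t \<le> 1"
    and mix: "t * a + (1 - t) * b = m"
  shows "bin_entropy m - t * bin_entropy a - (1 - t) * bin_entropy b \<le> 1"
    and "bin_entropy m - t * bin_entropy a - (1 - t) * bin_entropy b
           \<le> 8 * (sqrt_spread b - sqrt_spread a)^2"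
proof -
  have "bin_entropy m - t * bin_entropy a - (1 - t) * bin_entropy b
          \<le> min 1 (8 * (sqrt_spread b - sqrt_spread a)^2)"
  proof (cases "0 < m \<and> m < 1")
    case True
    then show ?thesis
      using assms bin_entropy_concavity_gap_le_chi_square[of a b t m]
        chi_square_term_le_1[of a m b] chi_square_term_le_sqrt_spread_diff[of a m b]
      by (intro min.boundedI) linarith+
  next
    case False
    with assms have "m = 0 \<or> m = 1" by linarith
    with assms show ?thesis
      using bin_entropy_concavity_gap_degenerate[of a b t m] by simp
  qed
  then show "bin_entropy m - t * bin_entropy a - (1 - t) * bin_entropy b \<le> 1"
    and "bin_entropy m - t * bin_entropy a - (1 - t) * bin_entropy b
           \<le> 8 * (sqrt_spread b - sqrt_spread a)^2"
    by simp_all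
qed

lemma sum_kernelZ:
  fixes f :: "nat \<Rightarrow> real"
  assumes i: "i \<in> {2..n-1}" and y: "y \<in> {1..n}"
  shows "(\<Sum>z\<in>{1..n} - {i}. kernelZ \<alpha> i y z * f z)
           = (if y = i then \<alpha> i * f (i - 1) + (1 - \<alpha> i) * f (i + 1) else f y)"
proof (cases "y = i")
  case True
  have "kernelZ \<alpha> i y z * f z
      = (if z = i - 1 then \<alpha> i * f (i - 1) else 0) + (if z = i + 1 then (1 - \<alpha> i) * f (i + 1) else 0)"
    for z using True i by (auto simp: kernelZ_def)
  moreover have "i - 1 \<in> {1..n} - {i}" "i + 1 \<in> {1..n} - {i}"
    using i by auto
  ultimately show ?thesis
    using True by (simp add: sum.distrib)
next
  case False
  then have "kernelZ \<alpha> i y z * f z = (if z = y then f y else 0)" for z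
    by (auto simp: kernelZ_def)
  with False y show ?thesis by simp
qed

lemma sum_mixed_kernelZ:
  fixes q f :: "nat \<Rightarrow> real"
  assumes i: "i \<in> {2..n-1}"
  shows "(\<Sum>z\<in>{1..n} - {i}. (\<Sum>y\<in>{1..n}. q y * kernelZ \<alpha> i y z) * f z)
           = (\<Sum>y\<in>{1..n}. q y * f y) - q i * (f i - \<alpha> i * f (i - 1) - (1 - \<alpha> i) * f (i + 1))"
proof -
  have "i \<in> {1..n}"
    using i by auto
  have "(\<Sum>z\<in>{1..n} - {i}. (\<Sum>y\<in>{1..n}. q y * kernelZ \<alpha> i y z) * f z)
      = (\<Sum>y\<in>{1..n}. q y * (\<Sum>z\<in>{1..n} - {i}. kernelZ \<alpha> i y z * f z))"
    unfolding sum_distrib_left sum_distrib_right by (subst sum.swap) (simp add: mult.assoc)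
  also have "\<dots> = (\<Sum>y\<in>{1..n}. q y * f y
                     - (if y = i then q i * (f i - \<alpha> i * f (i - 1) - (1 - \<alpha> i) * f (i + 1)) else 0))"
    using sum_kernelZ[OF i] by (intro sum.cong) (auto simp: algebra_simps)
  also have "\<dots> = (\<Sum>y\<in>{1..n}. q y * f y) - q i * (f i - \<alpha> i * f (i - 1) - (1 - \<alpha> i) * f (i + 1))"
    using \<open>i \<in> {1..n}\<close> by (simp add: sum_subtractf)
  finally show ?thesis .
qed

lemma mutual_info_binary_output:
  fixes J :: "nat \<Rightarrow> nat \<Rightarrow> real" and w r :: "nat \<Rightarrow> real"
  assumes "finite B"
    and w_nonneg: "\<And>b. b \<in> B \<Longrightarrow> 0 \<le> w b"
    and r_range: "\<And>b. b \<in> B \<Longrightarrow> 0 \<le> r b \<and> r b \<le> 1"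
    and J: "\<And>x b. x \<in> {0,1} \<Longrightarrow> b \<in> B \<Longrightarrow> J x b = w b * kernelX r b x"
  shows "mutual_info {0,1} B J
           = - (\<Sum>x\<in>{0,1}. (\<Sum>b\<in>B. J x b) * ln (\<Sum>b\<in>B. J x b))
             - (\<Sum>b\<in>B. w b * bin_entropy (r b))"
proof -
  define R where "R x = (\<Sum>b\<in>B. J x b)" for x
  have kernelX_nonneg: "0 \<le> kernelX r b x" if "b \<in> B" for b x
    using r_range[OF that] by (simp add: kernelX_def)
  have term_eq:
    "(if J x b = 0 then 0 else J x b * ln (J x b / (R x * (\<Sum>x'\<in>{0,1}. J x' b))))
       = w b * (kernelX r b x * ln (kernelX r b x)) - J x b * ln (R x)"
    if x: "x \<in> {0,1}" and b: "b \<in> B" for x b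
  proof (cases "J x b = 0")
    case True
    then show ?thesis using J[OF x b] by auto
  next
    case False
    have "0 < w b" "0 < kernelX r b x"
      using False J[OF x b] w_nonneg[OF b] kernelX_nonneg[OF b, of x]
      by (metis less_eq_real_def mult_zero_left mult_zero_right)+
    moreover have "J x b \<le> R x"
      unfolding R_def using J[OF x] w_nonneg kernelX_nonneg
      by (intro member_le_sum[OF b _ \<open>finite B\<close>]) auto
    ultimately have "0 < R x"
      using J[OF x b] by (smt (verit) mult_pos_pos)
    moreover have "(\<Sum>x'\<in>{0,1}. J x' b) = w b"
      using J[OF _ b] by (simp add: kernelX_def algebra_simps)
    ultimately show ?thesis
      using False J[OF x b] \<open>0 < w b\<close> \<open>0 < kernelX r b x\<close>
      by (simp add: ln_div ln_mult algebra_simps)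
  qed
  have "mutual_info {0,1} B J
      = (\<Sum>x\<in>{0,1}. \<Sum>b\<in>B. w b * (kernelX r b x * ln (kernelX r b x)) - J x b * ln (R x))"
    unfolding mutual_info_def R_def[symmetric] by (intro sum.cong refl) (use term_eq in auto)
  also have "\<dots> = (\<Sum>b\<in>B. \<Sum>x\<in>{0,1::nat}. w b * (kernelX r b x * ln (kernelX r b x)))
                   - (\<Sum>x\<in>{0,1}. R x * ln (R x))"
    by (simp only: sum_subtractf sum_distrib_right R_def sum.swap[of _ "{0,1::nat}"])
  also have "(\<Sum>b\<in>B. \<Sum>x\<in>{0,1::nat}. w b * (kernelX r b x * ln (kernelX r b x)))
      = - (\<Sum>b\<in>B. w b * bin_entropy (r b))"
    by (simp add: kernelX_def bin_entropy_def algebra_simps sum_negf[symmetric])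
  finally show ?thesis by (simp add: R_def)
qed

lemma mutual_info_PXZ_minus_PXY:
  fixes n :: nat and q p \<alpha> :: "nat \<Rightarrow> real"
  assumes i: "i \<in> {2..n-1}"
    and q_nonneg: "\<forall>y\<in>{1..n}. 0 \<le> q y"
    and p_range: "\<forall>y\<in>{1..n}. 0 \<le> p y \<and> p y \<le> 1"
    and \<alpha>_range: "0 \<le> \<alpha> i" "\<alpha> i \<le> 1"
    and \<alpha>_eq: "\<alpha> i * p (i - 1) + (1 - \<alpha> i) * p (i + 1) = p i"
  shows "mutual_info {0,1} ({1..n} - {i}) (PXZ n q p \<alpha> i) - mutual_info {0,1} {1..n} (PXY n q p \<alpha> i)
           = q i * (bin_entropy (p i) - \<alpha> i * bin_entropy (p (i - 1))
                    - (1 - \<alpha> i) * bin_entropy (p (i + 1)))"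
proof -
  define S where "S = {1..n} - {i}"
  define wZ where "wZ z = (\<Sum>y\<in>{1..n}. q y * kernelZ \<alpha> i y z)" for z
  define HX where "HX = - (\<Sum>x\<in>{0,1}. (\<Sum>y\<in>{1..n}. PXY n q p \<alpha> i x y) * ln (\<Sum>y\<in>{1..n}. PXY n q p \<alpha> i x y))"
  have PXZ_eq: "PXZ n q p \<alpha> i x z = wZ z * kernelX p z x" for x z
    by (simp add: PXZ_def PYZX_def wZ_def sum_distrib_right)
  have wZ_nonneg: "0 \<le> wZ z" for z
    unfolding wZ_def using q_nonneg \<alpha>_range by (intro sum_nonneg) (simp add: kernelZ_def)
  have PXY_eq: "PXY n q p \<alpha> i x y = q y * kernelX p y x" if "x \<in> {0,1}" "y \<in> {1..n}" for x y
  proof -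
    have "PXY n q p \<alpha> i x y = q y * (\<Sum>z\<in>S. kernelZ \<alpha> i y z * kernelX p z x)"
      by (simp add: PXY_def PYZX_def S_def sum_distrib_left mult.assoc)
    also have "\<dots> = q y * kernelX p y x"
      using sum_kernelZ[OF i \<open>y \<in> {1..n}\<close>, of \<alpha> "\<lambda>z. kernelX p z x"] \<alpha>_eq \<open>x \<in> {0,1}\<close>
      by (auto simp: S_def kernelX_def algebra_simps)
    finally show ?thesis .
  qed
  \<comment> \<open>Both joint laws have the same X-marginal, so only the conditional entropies differ.\<close>
  have same_marginal: "(\<Sum>z\<in>S. PXZ n q p \<alpha> i x z) = (\<Sum>y\<in>{1..n}. PXY n q p \<alpha> i x y)" for x
    unfolding PXZ_def PXY_def S_def by (rule sum.swap)
  have "mutual_info {0,1} S (PXZ n q p \<alpha> i) = HX - (\<Sum>z\<in>S. wZ z * bin_entropy (p z))"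
    unfolding HX_def same_marginal[symmetric]
    by (rule mutual_info_binary_output) (use p_range PXZ_eq wZ_nonneg in \<open>auto simp: S_def\<close>)
  moreover have "mutual_info {0,1} {1..n} (PXY n q p \<alpha> i) = HX - (\<Sum>y\<in>{1..n}. q y * bin_entropy (p y))"
    unfolding HX_def by (rule mutual_info_binary_output) (use p_range PXY_eq q_nonneg in auto)
  moreover have "(\<Sum>z\<in>S. wZ z * bin_entropy (p z))
      = (\<Sum>y\<in>{1..n}. q y * bin_entropy (p y))
        - q i * (bin_entropy (p i) - \<alpha> i * bin_entropy (p (i - 1)) - (1 - \<alpha> i) * bin_entropy (p (i + 1)))"
    unfolding S_def wZ_def by (rule sum_mixed_kernelZ[OF i])
  ultimately show ?thesis
    unfolding S_def by linarith
qed

lemma inverse_square_ge_tangent: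
  fixes x c :: real
  assumes "0 < x" "0 < c"
  shows "3 / c^2 - 2 * x / c^3 \<le> 1 / x^2"
proof -
  have "0 \<le> (c - x)^2 * (c + 2 * x)"
    using assms by simp
  then have "(3 * c - 2 * x) * x^2 \<le> c^3"
    by (simp add: power2_eq_square power3_eq_cube algebra_simps)
  with assms show ?thesis
    by (simp add: field_simps power2_eq_square power3_eq_cube)
qed

lemma card_cube_div_le_sum_inverse_square:
  fixes D :: "'i \<Rightarrow> real"
  assumes "finite I" and D_pos: "\<forall>i\<in>I. 0 < D i" and D_sum: "(\<Sum>i\<in>I. D i) \<le> S"
  shows "real (card I)^3 / S^2 \<le> (\<Sum>i\<in>I. 1 / (D i)^2)"
proof (cases "I = {}")
  case False
  define N where "N = real (card I)"
  define c where "c = S / N"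
  have "0 < N"
    using \<open>finite I\<close> False by (simp add: N_def card_gt_0_iff)
  have "0 < (\<Sum>i\<in>I. D i)"
    using \<open>finite I\<close> False D_pos by (intro sum_pos) auto
  then have "0 < S" "0 < c"
    using D_sum \<open>0 < N\<close> by (simp_all add: c_def)
  have "N^3 / S^2 = 3 / c^2 * N - 2 / c^3 * S"
    using \<open>0 < N\<close> \<open>0 < S\<close> by (simp add: c_def field_simps power2_eq_square power3_eq_cube)
  also have "\<dots> \<le> 3 / c^2 * N - 2 / c^3 * (\<Sum>i\<in>I. D i)"
    using D_sum \<open>0 < c\<close> by (simp add: divide_right_mono)
  also have "\<dots> = (\<Sum>i\<in>I. 3 / c^2 - 2 * D i / c^3)"
    by (simp add: N_def sum_subtractf sum_distrib_left sum_divide_distrib)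
  also have "\<dots> \<le> (\<Sum>i\<in>I. 1 / (D i)^2)"
    using D_pos \<open>0 < c\<close> by (intro sum_mono inverse_square_ge_tangent) auto
  finally show ?thesis
    by (simp add: N_def)
qed simp

lemma sum_gt_of_mult_square_gt:
  fixes q D :: "'i \<Rightarrow> real" and c S T :: real
  assumes "finite I" "I \<noteq> {}" "0 < c" "0 \<le> T"
    and D_nonneg: "\<forall>i\<in>I. 0 \<le> D i" and D_sum: "(\<Sum>i\<in>I. D i) \<le> S"
    and big: "\<forall>i\<in>I. T < q i * (c * (D i)^2)"
  shows "T * real (card I)^3 < c * S^2 * (\<Sum>i\<in>I. q i)"
proof -
  have D_pos: "0 < D i" and lower: "T / c * (1 / (D i)^2) < q i" if "i \<in> I" for i
  proof -
    have "D i \<noteq> 0"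
      using big that \<open>0 \<le> T\<close> by auto
    then show "0 < D i"
      using D_nonneg that by (simp add: order_less_le)
    with big that \<open>0 < c\<close> show "T / c * (1 / (D i)^2) < q i"
      by (simp add: field_simps)
  qed
  have "0 < (\<Sum>i\<in>I. D i)"
    using \<open>finite I\<close> \<open>I \<noteq> {}\<close> D_pos by (intro sum_pos) auto
  with D_sum have "0 < S"
    by linarith
  have "T / c * (real (card I)^3 / S^2) \<le> T / c * (\<Sum>i\<in>I. 1 / (D i)^2)"
    using card_cube_div_le_sum_inverse_square[OF \<open>finite I\<close> _ D_sum] D_pos \<open>0 \<le> T\<close> \<open>0 < c\<close>
    by (intro mult_left_mono) auto
  also have "\<dots> < (\<Sum>i\<in>I. q i)"
    unfolding sum_distrib_left by (rule sum_strict_mono[OF \<open>finite I\<close> \<open>I \<noteq> {}\<close> lower])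
  finally show ?thesis
    using \<open>0 < c\<close> \<open>0 < S\<close> by (simp add: field_simps)
qed

lemma exists_small_weighted_gap:
  fixes q g D :: "'i \<Rightarrow> real" and c S T :: real
  assumes "finite I" "I \<noteq> {}" "0 < c"
    and q_nonneg: "\<forall>i\<in>I. 0 \<le> q i" and q_sum: "(\<Sum>i\<in>I. q i) \<le> 1"
    and g_le_1: "\<forall>i\<in>I. g i \<le> 1" and g_le_D: "\<forall>i\<in>I. g i \<le> c * (D i)^2"
    and D_nonneg: "\<forall>i\<in>I. 0 \<le> D i" and D_sum: "(\<Sum>i\<in>I. D i) \<le> S"
    and threshold: "1 \<le> real (card I) * T \<or> c * S^2 \<le> real (card I) ^ 3 * T"
  shows "\<exists>i\<in>I. q i * g i \<le> T"
proof (rule ccontr)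
  assume "\<not> ?thesis"
  then have big: "T < q i * g i" if "i \<in> I" for i
    using that by auto
  have "0 < card I"
    using \<open>finite I\<close> \<open>I \<noteq> {}\<close> by (simp add: card_gt_0_iff)
  from threshold show False
  proof
    assume "1 \<le> real (card I) * T"
    moreover have "T < q i" if "i \<in> I" for i
      using big[OF that] mult_left_mono[OF g_le_1[rule_format, OF that] q_nonneg[rule_format, OF that]]
      by simp
    then have "card I * T < (\<Sum>i\<in>I. q i)"
      using sum_strict_mono[OF \<open>finite I\<close> \<open>I \<noteq> {}\<close>, of "\<lambda>_. T" q] by simp
    ultimately show False
      using q_sum by linarith
  next
    assume *: "c * S^2 \<le> real (card I) ^ 3 * T"
    moreover have "0 \<le> c * S^2"
      using \<open>0 < c\<close> by simp
    ultimately have "0 \<le> real (card I) ^ 3 * T"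
      by linarith
    then have "0 \<le> T"
      using \<open>0 < card I\<close> by (simp add: zero_le_mult_iff)
    have "T < q i * (c * (D i)^2)" if "i \<in> I" for i
      using big[OF that] mult_left_mono[OF g_le_D[rule_format, OF that] q_nonneg[rule_format, OF that]]
      by simp
    then have "T * real (card I)^3 < c * S^2 * (\<Sum>i\<in>I. q i)"
      using sum_gt_of_mult_square_gt[OF \<open>finite I\<close> \<open>I \<noteq> {}\<close> \<open>0 < c\<close> \<open>0 \<le> T\<close> D_nonneg D_sum] by blast
    also have "\<dots> \<le> c * S^2"
      using q_sum \<open>0 \<le> c * S^2\<close> by (simp add: mult_left_le)
    finally show False
      using * by (simp add: mult.commute)
  qed
qed

lemma cube_le_linear_or_shifted_cube:
  fixes x :: real
  assumes "3 \<le> x"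
  shows "x^3 \<le> 256 * (x - 2) \<or> x^3 \<le> 2 * (x - 2)^3"
proof -
  have "x^3 \<le> 256 * (x - 2)" if "x \<le> 12"
  proof (cases "x \<le> 8")
    case True
    then have "x^2 * x \<le> 64 * x"
      using assms power_mono[of x 8 2] by (intro mult_right_mono) auto
    moreover have "x^3 = x^2 * x"
      by (simp add: power3_eq_cube power2_eq_square)
    moreover have "256 * (x - 2) = 256 * x - 512"
      by simp
    ultimately show ?thesis
      using assms by linarith
  next
    case False
    then have "x^2 * x \<le> 144 * x"
      using that power_mono[of x 12 2] by (intro mult_right_mono) auto
    moreover have "x^3 = x^2 * x"
      by (simp add: power3_eq_cube power2_eq_square)
    moreover have "256 * (x - 2) = 256 * x - 512"
      by simp
    ultimately show ?thesis
      using False by linarith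
  qed
  moreover have "x^3 \<le> 2 * (x - 2)^3" if "12 \<le> x"
  proof -
    have "0 \<le> x^2 * (x - 12)"
      using that by simp
    moreover have "2 * (x - 2)^3 - x^3 = x^2 * (x - 12) + (24 * x - 16)"
      by (simp add: power2_eq_square power3_eq_cube algebra_simps)
    ultimately show ?thesis
      using that by linarith
  qed
  ultimately show ?thesis by linarith
qed

lemma sum_two_step_increments_le:
  fixes f :: "nat \<Rightarrow> real"
  assumes "2 \<le> n" and bounded: "\<forall>j\<in>{1..n}. \<bar>f j\<bar> \<le> 1"
  shows "(\<Sum>i\<in>{2..n-1}. f (i + 1) - f (i - 1)) \<le> 4"
proof -
  have telescope: "(\<Sum>i\<in>{2..m-1}. f (i + 1) - f (i - 1)) = f m + f (m - 1) - f 2 - f 1"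
    if "2 \<le> m" for m
    using that
  proof (induction m rule: nat_induct_at_least)
    case (Suc m)
    then have "{2..Suc m - 1} = insert m {2..m-1}"
      by auto
    with Suc show ?case by simp
  qed simp
  have "f n \<le> 1" "f (n - 1) \<le> 1" "-1 \<le> f 2" "-1 \<le> f 1"
    using bounded \<open>2 \<le> n\<close> by (auto simp: abs_le_iff)
  with telescope[OF \<open>2 \<le> n\<close>] show ?thesis
    by linarith
qed

lemma monotone_neighbours:
  fixes p :: "nat \<Rightarrow> real"
  assumes p_range: "\<forall>y\<in>{1..n}. 0 \<le> p y \<and> p y \<le> 1"
    and p_mono: "\<forall>y z. 1 \<le> y \<longrightarrow> y \<le> z \<longrightarrow> z \<le> n \<longrightarrow> p y \<le> p z"
    and i: "i \<in> {2..n-1}"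
  shows "0 \<le> p (i - 1)" "p (i - 1) \<le> p i" "p i \<le> p (i + 1)" "p (i + 1) \<le> 1"
proof -
  have "1 \<le> i - 1" "i + 1 \<le> n"
    using i by auto
  then show "0 \<le> p (i - 1)" "p (i - 1) \<le> p i" "p i \<le> p (i + 1)" "p (i + 1) \<le> 1"
    using p_range[rule_format, of "i - 1"] p_range[rule_format, of "i + 1"]
      p_mono[rule_format, of "i - 1" i] p_mono[rule_format, of i "i + 1"] by simp_all
qed

theorem theorem4:
  fixes n :: nat and q p \<alpha> :: "nat \<Rightarrow> real"
  assumes n3: "n \<ge> 3"
    and q_nonneg: "\<forall>y\<in>{1..n}. q y \<ge> 0"
    and q_sum: "(\<Sum>y\<in>{1..n}. q y) = 1"
    and p_range: "\<forall>y\<in>{1..n}. 0 \<le> p y \<and> p y \<le> 1"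
    and p_mono: "\<forall>y z. 1 \<le> y \<longrightarrow> y \<le> z \<longrightarrow> z \<le> n \<longrightarrow> p y \<le> p z"
    and \<alpha>_range: "\<forall>i\<in>{2..n-1}. 0 \<le> \<alpha> i \<and> \<alpha> i \<le> 1"
    and \<alpha>_eq: "\<forall>i\<in>{2..n-1}. \<alpha> i * p (i - 1) + (1 - \<alpha> i) * p (i + 1) = p i"
  shows "\<exists>i\<in>{2..n-1}.
           mutual_info {0,1} ({1..n} - {i}) (PXZ n q p \<alpha> i)
           - mutual_info {0,1} {1..n} (PXY n q p \<alpha> i)
           \<le> 256 / real n ^ 3"
proof -
  define I where "I = {2..n-1}"
  define gap where "gap i = bin_entropy (p i) - \<alpha> i * bin_entropy (p (i - 1))
                             - (1 - \<alpha> i) * bin_entropy (p (i + 1))" for i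
  define D where "D i = sqrt_spread (p (i + 1)) - sqrt_spread (p (i - 1))" for i
  have gap_bounds: "gap i \<le> 1 \<and> gap i \<le> 8 * (D i)^2 \<and> 0 \<le> D i" if "i \<in> I" for i
    using that monotone_neighbours[OF p_range p_mono, of i] \<alpha>_range \<alpha>_eq
      bin_entropy_concavity_gap_bounds[of "p (i - 1)" "p i" "p (i + 1)" "\<alpha> i"]
      sqrt_spread_mono[of "p (i - 1)" "p (i + 1)"]
    by (simp add: I_def gap_def D_def)
  have D_sum: "(\<Sum>i\<in>I. D i) \<le> 4"
    unfolding I_def D_def using n3 p_range abs_sqrt_spread_le_1
    by (intro sum_two_step_increments_le) simp_all
  have card_I: "real (card I) = real n - 2"
    using n3 by (simp add: I_def of_nat_diff)
  have threshold: "1 \<le> real (card I) * (256 / real n ^ 3)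
                   \<or> 8 * 4^2 \<le> real (card I) ^ 3 * (256 / real n ^ 3)"
    unfolding card_I using cube_le_linear_or_shifted_cube[of "real n"] n3 by (simp add: field_simps)
  have "(\<Sum>i\<in>I. q i) \<le> 1"
    using q_sum q_nonneg sum_mono2[of "{1..n}" I q] by (force simp: I_def)
  moreover have "finite I" "I \<noteq> {}" "\<forall>i\<in>I. 0 \<le> q i"
    using n3 q_nonneg by (auto simp: I_def)
  ultimately obtain i where "i \<in> I" "q i * gap i \<le> 256 / real n ^ 3"
    using exists_small_weighted_gap[of I 8 q gap D 4 "256 / real n ^ 3"] gap_bounds D_sum threshold
    by auto
  moreover have i: "i \<in> {2..n-1}"
    using \<open>i \<in> I\<close> by (simp add: I_def)
  moreover have "0 \<le> \<alpha> i" "\<alpha> i \<le> 1" "\<alpha> i * p (i - 1) + (1 - \<alpha> i) * p (i + 1) = p i"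
    using i \<alpha>_range \<alpha>_eq by auto
  ultimately show ?thesis
    using mutual_info_PXZ_minus_PXY[OF i q_nonneg p_range] unfolding gap_def
    by (intro bexI[of _ i]) simp_all
qed

end
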